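(* For all integers $i\geq 1$, \[ v_3(a_i+1)=\begin{cases} 0, & i\equiv 0,1,2,3,5,6,7 \pmod 8;\\ 1, & i\equiv 4 \text{ or } 12 \pmod{24};\\ v_3(i+4)+1, & i\equiv 20\pmod{24}. \end{cases} \]
   Context: The Narayana sequence $(a_n)_{n\geq 0}$ is defined by $a_0=0$, $a_1=a_2=1$ and $a_n=a_{n-1}+a_{n-3}$ for all $n\geq 3$. For a nonzero integer $x$, $v_3(x)$ denotes the $3$-adic valuation of $x$ (the exponent of the largest power of $3$ dividing $x$). *)

theory Defs
  imports "HOL-Computational_Algebra.Computational_Algebra"
begin

fun narayana :: "nat \<Rightarrow> nat" where
  "narayana 0 = 0"
| "narayana (Suc 0) = 1"
| "narayana (Suc (Suc 0)) = 1"
| "narayana (Suc (Suc (Suc n))) = narayana (Suc (Suc n)) + narayana n"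

definition v3 :: "nat \<Rightarrow> nat" where
  "v3 x = multiplicity (3::nat) x"

end

theory Submission
  imports Defs "HOL-Number_Theory.Cong"
begin

text \<open>
  Work in the ring \<open>\<int>[\<theta>]\<close> with \<open>\<theta>\<^sup>3 = \<theta>\<^sup>2 + 1\<close>, where \<open>a\<^sub>n\<close> is the value of an additive
  functional \<open>L\<close> on \<open>\<theta>\<^sup>n\<close>. The identity \<open>\<theta>\<^sup>8 = 1 + 3\<theta>\<^sup>5\<close> makes \<open>a\<^sub>n mod 3\<close> periodic with
  period 8, and \<open>3 | a\<^sub>n + 1\<close> only for \<open>n \<equiv> 4 (mod 8)\<close>. For such \<open>n\<close> write
  \<open>n + 4 = 8 \<cdot> 3\<^sup>j \<cdot> r\<close> with \<open>3 \<nmid> r\<close>; lifting the exponent gives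
  \<open>\<theta>\<^bsup>n+4\<^esup> = (1 + 3\<theta>\<^sup>5)\<^bsup>3\<^sup>j r\<^esup> \<equiv> 1 + 3\<^bsup>j+1\<^esup> r \<theta>\<^sup>5 (mod 3\<^bsup>j+2\<^esup>)\<close>. Multiplying by
  \<open>\<theta>\<^bsup>-4\<^esup> = (\<theta> - 1)\<^sup>2\<close> and applying \<open>L\<close> yields \<open>a\<^sub>n + 1 \<equiv> 3\<^bsup>j+1\<^esup> r (mod 3\<^bsup>j+2\<^esup>)\<close>, so
  \<open>v\<^sub>3(a\<^sub>n + 1) = j + 1 = v\<^sub>3(n + 4) + 1\<close> for every \<open>n \<equiv> 4 (mod 8)\<close>; the last two cases of the
  theorem are instances of this. Nothing needs \<open>i \<ge> 1\<close>: the statement also holds for \<open>i = 0\<close>.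
\<close>

lemma three_power_dvd_cube_lift:
  fixes y :: "'a::comm_ring_1"
  assumes "e \<ge> 1"
  shows "3 ^ (e + 2) dvd (1 + 3 ^ e * y) ^ 3 - (1 + 3 ^ (e + 1) * y)"
proof -
  obtain f where e: "e = Suc f" using assms by (cases e) auto
  define t where "t = (3::'a) ^ f"
  have "(1 + 3 ^ e * y) ^ 3 - (1 + 3 ^ (e + 1) * y) = (1 + 3 * t * y) ^ 3 - (1 + 9 * t * y)"
    by (simp add: e t_def)
  also have "\<dots> = 27 * t * (t * y\<^sup>2 + t\<^sup>2 * y ^ 3)"
    by (simp add: algebra_simps power2_eq_square power3_eq_cube)
  also have "\<dots> = 3 ^ (e + 2) * (t * y\<^sup>2 + t\<^sup>2 * y ^ 3)"
    by (simp add: e t_def)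
  finally show ?thesis by simp
qed

lemma three_power_dvd_power_lift:
  fixes y :: "'a::comm_ring_1"
  assumes "e \<ge> 1"
  shows "3 ^ (e + 1) dvd (1 + 3 ^ e * y) ^ n - (1 + of_nat n * 3 ^ e * y)"
proof (induction n)
  case (Suc n)
  let ?x = "1 + 3 ^ e * y"
  have "?x ^ Suc n - (1 + of_nat (Suc n) * 3 ^ e * y)
      = (?x ^ n - (1 + of_nat n * 3 ^ e * y)) * ?x + of_nat n * 3 ^ (e + e) * y\<^sup>2"
    by (simp add: algebra_simps power2_eq_square power_add)
  moreover have "(3::'a) ^ (e + 1) dvd 3 ^ (e + e)"
    using assms by (intro le_imp_power_dvd) simp
  ultimately show ?case
    using Suc.IH by simp
qed simp

lemma three_power_dvd_lifting_the_exponent: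
  fixes y :: "'a::comm_ring_1"
  assumes "e \<ge> 1"
  shows "3 ^ (e + k + 1) dvd (1 + 3 ^ e * y) ^ (3 ^ k * n) - (1 + of_nat n * 3 ^ (e + k) * y)"
proof (induction k)
  case 0
  then show ?case using three_power_dvd_power_lift[OF assms] by simp
next
  case (Suc k)
  obtain d where d: "(1 + 3 ^ e * y) ^ (3 ^ k * n) - (1 + of_nat n * 3 ^ (e + k) * y) = 3 ^ (e + k + 1) * d"
    using Suc.IH by (rule dvdE)
  define z where "z = of_nat n * y + 3 * d"
  have power_k: "(1 + 3 ^ e * y) ^ (3 ^ k * n) = 1 + 3 ^ (e + k) * z"
    using d by (simp add: z_def algebra_simps)
  have cube: "3 ^ (e + Suc k + 1) dvd (1 + 3 ^ (e + k) * z) ^ 3 - (1 + 3 ^ (e + k + 1) * z)"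
    using three_power_dvd_cube_lift[of "e + k" z] assms by simp
  have "(1 + 3 ^ e * y) ^ (3 ^ Suc k * n) = ((1 + 3 ^ e * y) ^ (3 ^ k * n)) ^ 3"
    by (simp flip: power_mult add: algebra_simps)
  also have "\<dots> = (1 + 3 ^ (e + k) * z) ^ 3"
    by (simp only: power_k)
  finally have "(1 + 3 ^ e * y) ^ (3 ^ Suc k * n) - (1 + of_nat n * 3 ^ (e + Suc k) * y)
      = ((1 + 3 ^ (e + k) * z) ^ 3 - (1 + 3 ^ (e + k + 1) * z)) + 3 ^ (e + Suc k + 1) * d"
    by (simp add: z_def algebra_simps)
  then show ?case
    using cube by (simp only: dvd_add dvd_triv_left)
qed

lemma multiplicity_eq_if_cong:
  fixes x r p :: nat
  assumes "[x = r * p ^ k] (mod p ^ (k + 1))" and "\<not> p dvd r" and "p > 1"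
  shows "multiplicity p x = k"
proof (rule multiplicity_eqI)
  have "[x = r * p ^ k] (mod p ^ k)"
    using assms(1) by (rule cong_dvd_modulus_nat) simp
  then show "p ^ k dvd x"
    by (simp add: cong_dvd_iff)
  show "\<not> p ^ Suc k dvd x"
  proof
    assume "p ^ Suc k dvd x"
    then have "p ^ k * p dvd p ^ k * r"
      using cong_dvd_iff[OF assms(1)] by (simp add: ac_simps)
    then show False
      using assms(2,3) by simp
  qed
qed

text \<open>\<open>IT a b c\<close> stands for \<open>a + b\<theta> + c\<theta>\<^sup>2\<close>; products are reduced with \<open>\<theta>\<^sup>3 = \<theta>\<^sup>2 + 1\<close> and
  \<open>\<theta>\<^sup>4 = \<theta>\<^sup>2 + \<theta> + 1\<close>.\<close>

datatype int_theta = IT int int int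

instantiation int_theta :: comm_ring_1
begin

definition "0 = IT 0 0 0"

definition "1 = IT 1 0 0"

fun plus_int_theta :: "int_theta \<Rightarrow> int_theta \<Rightarrow> int_theta" where
  "IT a b c + IT a' b' c' = IT (a + a') (b + b') (c + c')"

fun uminus_int_theta :: "int_theta \<Rightarrow> int_theta" where
  "- IT a b c = IT (- a) (- b) (- c)"

fun minus_int_theta :: "int_theta \<Rightarrow> int_theta \<Rightarrow> int_theta" where
  "IT a b c - IT a' b' c' = IT (a - a') (b - b') (c - c')"

fun times_int_theta :: "int_theta \<Rightarrow> int_theta \<Rightarrow> int_theta" where
  "IT a b c * IT a' b' c' =
     IT (a * a' + (b * c' + c * b') + c * c')
        (a * b' + b * a' + c * c')
        (a * c' + b * b' + c * a' + (b * c' + c * b') + c * c')"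

instance
proof
  fix x y z :: int_theta
  show "x * y * z = x * (y * z)"
    by (cases x; cases y; cases z) (simp add: algebra_simps)
  show "x * y = y * x"
    by (cases x; cases y) (simp add: algebra_simps)
  show "1 * x = x"
    by (cases x) (simp add: one_int_theta_def)
  show "x + y + z = x + (y + z)"
    by (cases x; cases y; cases z) simp
  show "x + y = y + x"
    by (cases x; cases y) simp
  show "0 + x = x"
    by (cases x) (simp add: zero_int_theta_def)
  show "- x + x = 0"
    by (cases x) (simp add: zero_int_theta_def)
  show "x - y = x + - y"
    by (cases x; cases y) simp
  show "(x + y) * z = x * z + y * z"
    by (cases x; cases y; cases z) (simp add: algebra_simps)
  show "(0::int_theta) \<noteq> 1"
    by (simp add: zero_int_theta_def one_int_theta_def)
qed

end

lemma of_nat_int_theta: "of_nat n = IT (int n) 0 0"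
  by (induction n) (simp_all add: zero_int_theta_def one_int_theta_def)

lemma of_int_int_theta: "of_int k = IT k 0 0"
  by (induction k rule: int_of_nat_induct)
     (simp_all add: of_nat_int_theta one_int_theta_def del: of_nat_Suc)

lemma numeral_int_theta: "numeral k = IT (numeral k) 0 0"
  using of_int_int_theta[of "numeral k"] by simp

fun narayana_functional :: "int_theta \<Rightarrow> int" where
  "narayana_functional (IT a b c) = b + c"

lemma narayana_functional_add:
  "narayana_functional (x + y) = narayana_functional x + narayana_functional y"
  by (cases x; cases y) simp

lemma narayana_functional_diff:
  "narayana_functional (x - y) = narayana_functional x - narayana_functional y"
  by (cases x; cases y) simp

lemma narayana_functional_of_int_mult:
  "narayana_functional (of_int k * x) = k * narayana_functional x"
  by (cases x) (simp add: of_int_int_theta algebra_simps)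

lemma dvd_narayana_functional:
  assumes "of_int k dvd x"
  shows "k dvd narayana_functional x"
proof -
  obtain y where "x = of_int k * y"
    using assms by (rule dvdE)
  then show ?thesis
    by (simp add: narayana_functional_of_int_mult)
qed

definition theta :: int_theta where
  "theta = IT 0 1 0"

lemma theta_cube: "theta ^ 3 = theta\<^sup>2 + 1"
  by (simp add: theta_def one_int_theta_def numeral_eq_Suc)

lemma narayana_functional_theta_power: "narayana_functional (theta ^ n) = int (narayana n)"
proof (induction n rule: narayana.induct)
  case (4 n)
  have "theta ^ Suc (Suc (Suc n)) = theta ^ n * theta ^ 3"
    by (simp add: numeral_eq_Suc algebra_simps)
  also have "\<dots> = theta ^ Suc (Suc n) + theta ^ n"
    by (simp add: theta_cube algebra_simps power2_eq_square)
  finally have "theta ^ Suc (Suc (Suc n)) = theta ^ Suc (Suc n) + theta ^ n" .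
  with 4 show ?case
    by (simp add: narayana_functional_add)
qed (simp_all add: theta_def one_int_theta_def)

lemma theta_power_8: "theta ^ 8 = 1 + 3 * theta ^ 5"
  by (simp add: theta_def one_int_theta_def numeral_eq_Suc numeral_int_theta)

lemma theta_minus_one_square_mult_theta_power_4: "(theta - 1)\<^sup>2 * theta ^ 4 = 1"
  by (simp add: theta_def one_int_theta_def numeral_eq_Suc)

lemma narayana_cong_narayana_mod_8: "[narayana n = narayana (n mod 8)] (mod 3)"
proof -
  define q where "q = n div 8"
  let ?u = "1 + 3 * theta ^ 5"
  have "3 * 3 dvd ?u ^ q - (1 + of_nat q * 3 * theta ^ 5)"
    using three_power_dvd_power_lift[of 1 "theta ^ 5" q] by simp
  then have "3 dvd ?u ^ q - (1 + of_nat q * 3 * theta ^ 5)"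
    by (rule dvd_mult_left)
  moreover have "?u ^ q - 1 = (?u ^ q - (1 + of_nat q * 3 * theta ^ 5)) + 3 * (of_nat q * theta ^ 5)"
    by (simp add: algebra_simps)
  ultimately have "3 dvd ?u ^ q - 1"
    by (simp only: dvd_add dvd_triv_left)
  moreover have "theta ^ n = theta ^ (n mod 8 + 8 * q)"
    by (simp add: q_def)
  then have "theta ^ n - theta ^ (n mod 8) = theta ^ (n mod 8) * (?u ^ q - 1)"
    by (simp add: power_add power_mult theta_power_8 right_diff_distrib)
  ultimately have "3 dvd theta ^ n - theta ^ (n mod 8)"
    by simp
  then have "3 dvd narayana_functional (theta ^ n - theta ^ (n mod 8))"
    using dvd_narayana_functional[of 3] by simp
  then have "3 dvd int (narayana n) - int (narayana (n mod 8))"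
    by (simp add: narayana_functional_diff narayana_functional_theta_power)
  then show ?thesis
    by (simp flip: cong_int_iff add: cong_iff_dvd_diff)
qed

lemma three_dvd_narayana_plus_one_iff: "3 dvd narayana n + 1 \<longleftrightarrow> n mod 8 = 4"
proof -
  have "[narayana n + 1 = narayana (n mod 8) + 1] (mod 3)"
    by (intro cong_add narayana_cong_narayana_mod_8 cong_refl)
  then have "3 dvd narayana n + 1 \<longleftrightarrow> 3 dvd narayana (n mod 8) + 1"
    by (rule cong_dvd_iff)
  moreover have "3 dvd narayana s + 1 \<longleftrightarrow> s = 4" if "s < 8" for s
    using that by (auto simp: less_Suc_eq numeral_eq_Suc) presburger+
  ultimately show ?thesis
    by simp
qed

lemma narayana_plus_one_cong:
  assumes "i + 4 = 8 * 3 ^ j * r"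
  shows "[narayana i + 1 = r * 3 ^ (j + 1)] (mod 3 ^ (j + 2))"
proof -
  let ?u = "1 + 3 * theta ^ 5" and ?w = "(theta - 1)\<^sup>2" and ?c = "of_int (int r * 3 ^ (j + 1))"
  have lift: "3 ^ (j + 2) dvd ?u ^ (3 ^ j * r) - (1 + ?c * theta ^ 5)"
    using three_power_dvd_lifting_the_exponent[where e = 1 and y = "theta ^ 5" and k = j and n = r]
    by (simp add: ac_simps)
  have "theta ^ 4 * theta ^ i = theta ^ (i + 4)"
    by (simp add: power_add)
  also have "\<dots> = ?u ^ (3 ^ j * r)"
    by (simp only: assms mult.assoc power_mult theta_power_8)
  finally have "theta ^ i = ?w * ?u ^ (3 ^ j * r)"
    by (metis theta_minus_one_square_mult_theta_power_4 mult.assoc mult_1)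
  moreover have "?w * (1 + ?c * theta ^ 5) = ?w + ?c * theta"
    by (simp add: theta_def one_int_theta_def numeral_eq_Suc of_int_int_theta algebra_simps)
  ultimately have "theta ^ i - (?w + ?c * theta) = ?w * (?u ^ (3 ^ j * r) - (1 + ?c * theta ^ 5))"
    by (simp add: right_diff_distrib)
  then have "of_int (3 ^ (j + 2)) dvd theta ^ i - (?w + ?c * theta)"
    using lift by simp
  then have "3 ^ (j + 2) dvd narayana_functional (theta ^ i - (?w + ?c * theta))"
    by (rule dvd_narayana_functional)
  moreover have "narayana_functional ?w = - 1" and "narayana_functional theta = 1"
    by (simp_all add: theta_def one_int_theta_def power2_eq_square)
  then have "narayana_functional (theta ^ i - (?w + ?c * theta))
      = int (narayana i) - (- 1 + int r * 3 ^ (j + 1))"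
    by (simp only: narayana_functional_diff narayana_functional_add narayana_functional_of_int_mult
        narayana_functional_theta_power mult_1_right)
  ultimately have "3 ^ (j + 2) dvd int (narayana i) - (- 1 + int r * 3 ^ (j + 1))"
    by simp
  then show ?thesis
    by (simp flip: cong_int_iff add: cong_iff_dvd_diff algebra_simps)
qed

lemma v3_narayana_plus_one_if_mod_8_eq_4:
  assumes "i mod 8 = 4"
  shows "v3 (narayana i + 1) = v3 (i + 4) + 1"
proof -
  define n where "n = (i + 4) div 8"
  have i4: "i + 4 = 8 * n"
    using assms unfolding n_def by presburger
  then have "n \<noteq> 0"
    by simp
  then obtain r where r: "n = 3 ^ multiplicity 3 n * r" "\<not> 3 dvd r"
    using multiplicity_decompose'[where x = n and p = 3] by auto
  define j where "j = multiplicity 3 n"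
  have "i + 4 = 3 ^ j * (8 * r)"
    using i4 r(1) unfolding j_def by (simp add: mult.left_commute)
  moreover have "\<not> 3 dvd 8 * r"
    using r(2) by presburger
  ultimately have "v3 (i + 4) = j"
    unfolding v3_def by (rule multiplicity_decomposeI) simp
  moreover have "v3 (narayana i + 1) = j + 1"
    unfolding v3_def
    using narayana_plus_one_cong[of i j r] i4 r unfolding j_def
    by (intro multiplicity_eq_if_cong) (simp_all add: ac_simps)
  ultimately show ?thesis
    by simp
qed

theorem theorem3p6:
  fixes i :: nat
  assumes "i \<ge> 1"
  shows "(i mod 8 \<in> {0,1,2,3,5,6,7} \<longrightarrow> v3 (narayana i + 1) = 0)
       \<and> (i mod 24 \<in> {4,12} \<longrightarrow> v3 (narayana i + 1) = 1)
       \<and> (i mod 24 = 20 \<longrightarrow> v3 (narayana i + 1) = v3 (i + 4) + 1)"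
proof (intro conjI impI)
  assume "i mod 8 \<in> {0,1,2,3,5,6,7}"
  then have "\<not> 3 dvd narayana i + 1"
    using three_dvd_narayana_plus_one_iff[of i] by auto
  then show "v3 (narayana i + 1) = 0"
    unfolding v3_def by (rule not_dvd_imp_multiplicity_0)
next
  assume "i mod 24 \<in> {4,12}"
  then have "i mod 8 = 4" and "i mod 3 = 0 \<or> i mod 3 = 1"
    using mod_mod_cancel[of 8 24 i] mod_mod_cancel[of 3 24 i] by auto
  from this(2) have "v3 (i + 4) = 0"
    unfolding v3_def by (intro not_dvd_imp_multiplicity_0) presburger
  with v3_narayana_plus_one_if_mod_8_eq_4[OF \<open>i mod 8 = 4\<close>] show "v3 (narayana i + 1) = 1"
    by simp
next
  assume "i mod 24 = 20"
  then have "i mod 8 = 4"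
    using mod_mod_cancel[of 8 24 i] by simp
  then show "v3 (narayana i + 1) = v3 (i + 4) + 1"
    by (rule v3_narayana_plus_one_if_mod_8_eq_4)
qed

end
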